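(* Let $\mathbb{F}$ be an algebraically closed field of characteristic zero, $J_1=E_{12}$ and $J_2=E_{12}+E_{23}$. Let $\underline{A}=(J_2,A_2,A_3)$ and $\underline{B}=(J_1,B_2,B_3)$ be elements of $\mathcal{N}_3^3$ such that $f(\underline{A})=f(\underline{B})$ for all $f\in S_{3,3}$. Then $f(\underline{A})=f(\underline{B})$ for all $f\in P_{3,3}$.
   Context: $E_{ij}$ is the $3\times3$ matrix unit. $\mathcal{N}_3^3$ is the set of triples of nilpotent $3\times3$ matrices over $\mathbb{F}$. $\mathrm{tr}(Y_{i_1}\cdots Y_{i_r})$ denotes the function $\underline{A}\mapsto\mathrm{tr}(A_{i_1}\cdots A_{i_r})$. $S_{3,3}$ is the set consisting of: $\mathrm{tr}(Y_iY_j),\ \mathrm{tr}(Y_i^2Y_j),\ \mathrm{tr}(Y_iY_j^2),\ \mathrm{tr}(Y_i^2Y_j^2),\ \mathrm{tr}(Y_i^2Y_j^2Y_iY_j)$ for $1\le i<j\le3$; $\mathrm{tr}(Y_1Y_2Y_3)$, $\mathrm{tr}(Y_1Y_3Y_2)$; $\mathrm{tr}(Y_i^2Y_jY_k)$ for $\{i,j,k\}=\{1,2,3\}$; $\mathrm{tr}(Y_1^2Y_2Y_1Y_3)$, $\mathrm{tr}(Y_2^2Y_1Y_2Y_3)$, $\mathrm{tr}(Y_3^2Y_1Y_3Y_2)$. $P_{3,3}=S_{3,3}\sqcup P'_{3,3}$, where $P'_{3,3}$ consists of $\mathrm{tr}(Y_i^2Y_j^2Y_k)$ and $\mathrm{tr}(Y_i^2Y_j^2Y_iY_k)$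 for $\{i,j,k\}=\{1,2,3\}$, and $\mathrm{tr}(Y_1^2Y_2^2Y_3^2)$. *)

theory Defs
  imports "HOL-Analysis.Analysis" "HOL-Computational_Algebra.Polynomial"
begin

type_synonym 'a mat3 = "'a ^ 3 ^ 3"

definition matunit :: "3 \<Rightarrow> 3 \<Rightarrow> 'a::semiring_1 mat3" where
  "matunit i j = (\<chi> r c. if r = i \<and> c = j then 1 else 0)"

definition J1 :: "'a::semiring_1 mat3" where "J1 = matunit 1 2"
definition J2 :: "'a::semiring_1 mat3" where "J2 = matunit 1 2 + matunit 2 3"

fun mpow :: "'a::semiring_1 mat3 \<Rightarrow> nat \<Rightarrow> 'a mat3" where
  "mpow A 0 = mat 1"
| "mpow A (Suc n) = A ** mpow A n"

definition nilpotent3 :: "'a::semiring_1 mat3 \<Rightarrow> bool" where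
  "nilpotent3 A \<longleftrightarrow> (\<exists>k. mpow A k = 0)"

definition N33 :: "('a::semiring_1 mat3 \<times> 'a mat3 \<times> 'a mat3) set" where
  "N33 = {(X1, X2, X3). nilpotent3 X1 \<and> nilpotent3 X2 \<and> nilpotent3 X3}"

definition sel :: "'b \<times> 'b \<times> 'b \<Rightarrow> nat \<Rightarrow> 'b" where
  "sel t i = (if i = 1 then fst t else if i = 2 then fst (snd t) else snd (snd t))"

text \<open>tr(Y_{i_1} ... Y_{i_r}) evaluated at a triple, the word being [i_1,...,i_r].\<close>
definition trw :: "'a::semiring_1 mat3 \<times> 'a mat3 \<times> 'a mat3 \<Rightarrow> nat list \<Rightarrow> 'a" where
  "trw t w = trace (foldr (\<lambda>i M. sel t i ** M) w (mat 1))"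

definition S33 :: "nat list set" where
  "S33 =
     {w. \<exists>i j. 1 \<le> i \<and> i < j \<and> j \<le> 3 \<and>
          w \<in> {[i,j], [i,i,j], [i,j,j], [i,i,j,j], [i,i,j,j,i,j]}}
   \<union> {[1,2,3], [1,3,2]}
   \<union> {[i,i,j,k] | i j k. {i,j,k} = {1,2,3::nat}}
   \<union> {[1,1,2,1,3], [2,2,1,2,3], [3,3,1,3,2]}"

definition P33' :: "nat list set" where
  "P33' =
     {[i,i,j,j,k] | i j k. {i,j,k} = {1,2,3::nat}}
   \<union> {[i,i,j,j,i,k] | i j k. {i,j,k} = {1,2,3::nat}}
   \<union> {[1,1,2,2,3,3]}"

definition P33 :: "nat list set" where
  "P33 = S33 \<union> P33'"

end

theory Submission
  imports Defs
begin

text \<open>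
  A nilpotent 3x3 matrix N over an algebraically closed field has characteristic polynomial
  x^3, so N^3 = 0 and N^2, being the adjugate of N, has rank at most one.
  Every word of P'_{3,3} begins with a square Y_i^2.
  On the A-side, J_1^2 = 0 turns the hypotheses for the words 112, 113, 1122, 1133, 1123, 1132
  into the vanishing of the (3,1) entries of A_2, A_3 and of their products, since
  tr(J_2^2 X) = X_{31}.
  With nilpotency this leaves two shapes: either J_2, A_2, A_3 all have zero first column, or
  all have zero last row; in both the trace of a word beginning with a square vanishes.
  On the B-side the words containing Y_1^2 vanish because J_1^2 = 0.
  For the four remaining words, either B_2^2 = 0, or B_2 is similar to J_2, and after
  conjugating, the hypotheses for 122, 233, 2233, 2231 (whose A-side values are now known to be
  zero) together with rank B_3^2 \<le> 1 make B_3^2 upper triangular, which kills all four traces.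
\<close>

definition principal_minor_sum :: "'a::comm_ring_1 mat3 \<Rightarrow> 'a" where
  "principal_minor_sum N =
     N$1$1 * N$2$2 - N$1$2 * N$2$1 + N$1$1 * N$3$3 - N$1$3 * N$3$1
     + N$2$2 * N$3$3 - N$2$3 * N$3$2"

lemma trace_mat3: "trace (N::'a::semiring_1 mat3) = N$1$1 + N$2$2 + N$3$3"
  by (simp add: trace_def sum_3)

lemma mat3_mult_entry:
  "((X::'a::semiring_1 mat3) ** Y)$i$j = X$i$1 * Y$1$j + X$i$2 * Y$2$j + X$i$3 * Y$3$j"
  by (simp add: matrix_matrix_mult_def sum_3)

lemma det_mat_minus_mat3:
  fixes N :: "'a::comm_ring_1 mat3"
  shows "det (mat x - N) = x^3 - trace N * x^2 + principal_minor_sum N * x - det N"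
  unfolding det_3 trace_mat3 principal_minor_sum_def
  by (simp add: mat_def power2_eq_square power3_eq_cube algebra_simps)

lemma mpow_eigenvector:
  fixes N :: "'a::field mat3"
  assumes "N *v v = c *s v"
  shows "mpow N k *v v = c^k *s v"
  by (induction k) (auto simp: assms matrix_vector_mul_assoc[symmetric] vector_scalar_commute)

lemma nilpotent3_eigenvalue_zero:
  fixes N :: "'a::field mat3"
  assumes "nilpotent3 N" and "det (mat c - N) = 0"
  shows "c = 0"
proof -
  obtain k where k: "mpow N k = 0"
    using assms(1) unfolding nilpotent3_def by blast
  have "\<not> invertible (mat c - N)"
    using assms(2) invertible_det_nz by blast
  then obtain v where v: "(mat c - N) *v v = 0" "v \<noteq> 0"
    unfolding invertible_left_inverse matrix_left_invertible_ker by blast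
  have "mat c *v v = c *s v"
    by (simp add: vec_eq_iff matrix_vector_mult_def mat_def sum_3 forall_3)
  with v(1) have "N *v v = c *s v"
    by (simp add: matrix_vector_mult_diff_rdistrib)
  then have "mpow N k *v v = c^k *s v"
    by (rule mpow_eigenvector)
  with k v(2) show "c = 0"
    by simp
qed

lemma cubic_only_root_zero:
  fixes a b c :: "'a::alg_closed_field"
  assumes only_zero: "\<And>x. x^3 - a * x^2 + b * x - c = 0 \<Longrightarrow> x = 0"
  shows "a = 0 \<and> b = 0 \<and> c = 0"
proof -
  obtain r where "poly [:-c, b, -a, 1:] r = 0"
    using alg_closed_imp_poly_has_root[of "[:-c, b, -a, 1:]"] by auto
  then have "r^3 - a * r^2 + b * r - c = 0"
    by (simp add: algebra_simps power2_eq_square power3_eq_cube)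
  with only_zero have c: "c = 0"
    by force
  obtain s where s: "poly [:b, -a, 1:] s = 0"
    using alg_closed_imp_poly_has_root[of "[:b, -a, 1:]"] by auto
  have "s^3 - a * s^2 + b * s - c = s * poly [:b, -a, 1:] s"
    using c by (simp add: algebra_simps power2_eq_square power3_eq_cube)
  with s only_zero have "s = 0"
    by simp
  with s have b: "b = 0"
    by simp
  have "a^3 - a * a^2 + b * a - c = 0"
    using b c by (simp add: power2_eq_square power3_eq_cube)
  with only_zero b c show ?thesis
    by blast
qed

lemma nilpotent3_char_coeffs:
  fixes N :: "'a::alg_closed_field mat3"
  assumes "nilpotent3 N"
  shows "trace N = 0" "principal_minor_sum N = 0" "det N = 0"
  using cubic_only_root_zero[of "trace N" "principal_minor_sum N" "det N"]
    nilpotent3_eigenvalue_zero[OF assms] by (auto simp: det_mat_minus_mat3)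

lemma cayley_hamilton_mat3:
  fixes N :: "'a::field mat3"
  shows "(N ** (N ** N))$i$j =
    trace N * (N ** N)$i$j - principal_minor_sum N * N$i$j + (if i = j then det N else 0)"
proof -
  have "\<forall>i j. (N ** (N ** N))$i$j =
    trace N * (N ** N)$i$j - principal_minor_sum N * N$i$j + (if i = j then det N else 0)"
    unfolding trace_mat3 principal_minor_sum_def det_3 forall_3
    by (simp add: matrix_matrix_mult_def sum_3; intro conjI; algebra)
  then show ?thesis
    by blast
qed

lemma nilpotent3_cube:
  fixes N :: "'a::alg_closed_field mat3"
  assumes "nilpotent3 N"
  shows "N ** (N ** N) = 0"
  using nilpotent3_char_coeffs[OF assms] by (simp add: vec_eq_iff cayley_hamilton_mat3)

lemma nilpotent3_square_minor:
  fixes N :: "'a::alg_closed_field mat3"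
  assumes "nilpotent3 N"
  shows "(N ** N)$3$2 * (N ** N)$2$1 = (N ** N)$3$1 * (N ** N)$2$2"
proof -
  \<comment> \<open>N^2 - (trace N) N + (principal_minor_sum N) I is the adjugate of N, and the 2x2
    minors of the adjugate are det N times the entries of N.\<close>
  have "((N ** N)$3$2 - trace N * N$3$2) * ((N ** N)$2$1 - trace N * N$2$1)
      - ((N ** N)$3$1 - trace N * N$3$1) * ((N ** N)$2$2 - trace N * N$2$2 + principal_minor_sum N)
      = det N * N$3$1"
    unfolding trace_mat3 principal_minor_sum_def det_3
    by (simp add: matrix_matrix_mult_def sum_3) algebra
  then show ?thesis
    using nilpotent3_char_coeffs[OF assms] by simp
qed

lemma nilpotent3_first_column:
  fixes N :: "'a::alg_closed_field mat3"
  assumes "nilpotent3 N" and "N$2$1 = 0" and "N$3$1 = 0"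
  shows "N$i$1 = 0" and "i \<noteq> 1 \<Longrightarrow> (N ** N)$i$k = 0"
proof -
  note coeffs = nilpotent3_char_coeffs[OF assms(1)]
  have "(N ** (N ** N))$1$1 = 0"
    using nilpotent3_cube[OF assms(1)] by simp
  then have "N$1$1 ^ 3 = 0"
    using assms(2,3) by (simp add: mat3_mult_entry power3_eq_cube)
  then have N11: "N$1$1 = 0"
    by simp
  then show "N$i$1 = 0"
    using assms(2,3) exhaust_3[of i] by auto
  have "N$3$3 = - N$2$2" and "N$2$3 * N$3$2 = N$2$2 * N$3$3"
    using coeffs(1,2) N11 assms(2,3)
    by (simp_all add: trace_mat3 principal_minor_sum_def eq_neg_iff_add_eq_0 add.commute)
  then show "(N ** N)$i$k = 0" if "i \<noteq> 1"
    using that N11 assms(2,3) exhaust_3[of i] exhaust_3[of k]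
    by (auto simp: mat3_mult_entry algebra_simps)
qed

lemma nilpotent3_last_row:
  fixes N :: "'a::alg_closed_field mat3"
  assumes "nilpotent3 N" and "N$3$1 = 0" and "N$3$2 = 0"
  shows "N$3$k = 0" and "k \<noteq> 3 \<Longrightarrow> (N ** N)$i$k = 0"
proof -
  note coeffs = nilpotent3_char_coeffs[OF assms(1)]
  have "(N ** (N ** N))$3$3 = 0"
    using nilpotent3_cube[OF assms(1)] by simp
  then have "N$3$3 ^ 3 = 0"
    using assms(2,3) by (simp add: mat3_mult_entry power3_eq_cube)
  then have N33: "N$3$3 = 0"
    by simp
  then show "N$3$k = 0"
    using assms(2,3) exhaust_3[of k] by auto
  have "N$1$1 = - N$2$2" and "N$1$2 * N$2$1 = N$1$1 * N$2$2"
    using coeffs(1,2) N33 assms(2,3)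
    by (simp_all add: trace_mat3 principal_minor_sum_def eq_neg_iff_add_eq_0)
  then show "(N ** N)$i$k = 0" if "k \<noteq> 3"
    using that N33 assms(2,3) exhaust_3[of i] exhaust_3[of k]
    by (auto simp: mat3_mult_entry algebra_simps)
qed

primrec word_mat :: "'a::semiring_1 mat3 \<times> 'a mat3 \<times> 'a mat3 \<Rightarrow> nat list \<Rightarrow> 'a mat3" where
  "word_mat t [] = mat 1"
| "word_mat t (i # w) = sel t i ** word_mat t w"

lemma trw_word_mat: "trw t w = trace (word_mat t w)"
proof -
  have "foldr (\<lambda>i M. sel t i ** M) w (mat 1) = word_mat t w"
    by (induction w) simp_all
  then show ?thesis
    by (simp add: trw_def)
qed

lemma word_mat_append: "word_mat t (u @ v) = word_mat t u ** word_mat t v"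
  by (induction u) (simp_all add: matrix_mul_assoc)

lemma trw_rotate:
  fixes t :: "'a::comm_semiring_1 mat3 \<times> 'a mat3 \<times> 'a mat3"
  shows "trw t (u @ v) = trw t (v @ u)"
  unfolding trw_word_mat word_mat_append by (rule trace_mul_sym)

lemma sel_mem: "sel (X, Y, Z) i \<in> {X, Y, Z}"
  by (simp add: sel_def)

lemma word_mat_first_column:
  assumes "\<And>M i. M \<in> {X, Y, Z} \<Longrightarrow> M$i$1 = 0" and "w \<noteq> []"
  shows "(word_mat (X, Y, Z) w)$i$1 = 0"
  using assms(2)
proof (induction w arbitrary: i)
  case (Cons x w)
  have "(sel (X, Y, Z) x)$i$1 = 0" for i
    using assms(1)[OF sel_mem] .
  with Cons.IH show ?case
    by (cases "w = []") (simp_all add: mat3_mult_entry)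
qed simp

lemma trw_square_word_first_column:
  fixes X Y Z :: "'a::comm_semiring_1 mat3"
  assumes "\<And>M i. M \<in> {X, Y, Z} \<Longrightarrow> M$i$1 = 0"
    and "\<And>M i k. M \<in> {X, Y, Z} \<Longrightarrow> i \<noteq> 1 \<Longrightarrow> (M ** M)$i$k = 0"
  shows "trw (X, Y, Z) (a # a # b # w) = 0"
proof -
  define S W where "S = sel (X, Y, Z) a ** sel (X, Y, Z) a" and "W = word_mat (X, Y, Z) (b # w)"
  have S: "S$i$k = 0" if "i \<noteq> 1" for i k
    unfolding S_def using assms(2)[OF sel_mem that] .
  have W: "W$k$1 = 0" for k
    unfolding W_def by (rule word_mat_first_column[OF assms(1)]) simp_all
  have "trw (X, Y, Z) (a # a # b # w) = trace (S ** W)"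
    unfolding S_def W_def trw_word_mat by (simp add: matrix_mul_assoc)
  also have "\<dots> = 0"
    using S W by (simp add: trace_mat3 mat3_mult_entry)
  finally show ?thesis .
qed

lemma trw_square_word_last_row:
  fixes X Y Z :: "'a::comm_semiring_1 mat3"
  assumes "\<And>M k. M \<in> {X, Y, Z} \<Longrightarrow> M$3$k = 0"
    and "\<And>M i k. M \<in> {X, Y, Z} \<Longrightarrow> k \<noteq> 3 \<Longrightarrow> (M ** M)$i$k = 0"
  shows "trw (X, Y, Z) (a # a # b # w) = 0"
proof -
  define S W where "S = sel (X, Y, Z) a ** sel (X, Y, Z) a" and "W = word_mat (X, Y, Z) (b # w)"
  have S: "S$i$k = 0" if "k \<noteq> 3" for i k
    unfolding S_def using assms(2)[OF sel_mem that] .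
  have "(sel (X, Y, Z) b)$3$k = 0" for k
    using assms(1)[OF sel_mem] .
  then have W: "W$3$k = 0" for k
    by (simp add: W_def mat3_mult_entry)
  have "trw (X, Y, Z) (a # a # b # w) = trace (S ** W)"
    unfolding S_def W_def trw_word_mat by (simp add: matrix_mul_assoc)
  also have "\<dots> = 0"
    using S W by (simp add: trace_mat3 mat3_mult_entry)
  finally show ?thesis .
qed

lemma J1_J1_mult: "J1 ** (J1 ** X) = (0::'a::semiring_1 mat3)"
  by (simp add: matrix_mul_assoc J1_def matunit_def vec_eq_iff mat3_mult_entry)

lemma J2_square: "J2 ** J2 = (matunit 1 3 :: 'a::semiring_1 mat3)"
  by (simp add: J2_def matunit_def vec_eq_iff mat3_mult_entry)

lemma J2_J2_mult: "J2 ** (J2 ** X) = matunit 1 3 ** (X::'a::semiring_1 mat3)"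
  by (simp add: matrix_mul_assoc J2_square)

lemma J2_first_column: "(J2::'a::semiring_1 mat3)$i$1 = 0"
  by (simp add: J2_def matunit_def)

lemma J2_last_row: "(J2::'a::semiring_1 mat3)$3$k = 0"
  by (simp add: J2_def matunit_def)

lemma trace_J2_mult: "trace (J2 ** X) = X$2$1 + (X::'a::comm_semiring_1 mat3)$3$2"
  by (simp add: J2_def matunit_def trace_mat3 mat3_mult_entry)

lemma trace_matunit_mult: "trace (matunit i j ** (X::'a::semiring_1 mat3)) = X$j$i"
  using exhaust_3[of i] exhaust_3[of j]
  by (elim disjE) (simp_all add: trace_mat3 mat3_mult_entry matunit_def)

lemma trw_J1_square_prefix: "trw (J1, X, Y) (1 # 1 # w) = (0::'a::semiring_1)"
  by (simp add: trw_word_mat sel_def J1_J1_mult trace_mat3)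

lemma trw_J2_square_prefix:
  fixes X Y :: "'a::semiring_1 mat3"
  shows "trw (J2, X, Y) (1 # 1 # w) = (word_mat (J2, X, Y) w)$3$1"
  by (simp add: trw_word_mat sel_def J2_J2_mult trace_matunit_mult)

lemma square_words_vanish_J2:
  fixes A2 A3 :: "'a::alg_closed_field mat3"
  assumes "nilpotent3 A2" and "nilpotent3 A3"
    and "\<And>X. X \<in> {A2, A3} \<Longrightarrow> X$3$1 = 0"
    and "\<And>X Y. X \<in> {A2, A3} \<Longrightarrow> Y \<in> {A2, A3} \<Longrightarrow> (X ** Y)$3$1 = 0"
  shows "trw (J2, A2, A3) (a # a # b # w) = 0"
proof -
  have "X$3$2 * Y$2$1 = 0" if "X \<in> {A2, A3}" "Y \<in> {A2, A3}" for X Y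
    using assms(3)[OF that(1)] assms(3)[OF that(2)] assms(4)[OF that]
    by (simp add: mat3_mult_entry)
  then consider "A2$2$1 = 0" "A3$2$1 = 0" | "A2$3$2 = 0" "A3$3$2 = 0"
    by auto
  then show ?thesis
  proof cases
    case 1
    show ?thesis
    proof (rule trw_square_word_first_column)
      fix M i k assume "M \<in> {J2, A2, A3}"
      then show "M$i$1 = 0" and "i \<noteq> 1 \<Longrightarrow> (M ** M)$i$k = 0"
        using 1 assms(1-3) nilpotent3_first_column[of A2] nilpotent3_first_column[of A3]
        by (auto simp: J2_first_column J2_square matunit_def)
    qed
  next
    case 2
    show ?thesis
    proof (rule trw_square_word_last_row)
      fix M i k assume "M \<in> {J2, A2, A3}"
      then show "M$3$k = 0" and "k \<noteq> 3 \<Longrightarrow> (M ** M)$i$k = 0"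
        using 2 assms(1-3) nilpotent3_last_row[of A2] nilpotent3_last_row[of A3]
        by (auto simp: J2_last_row J2_square matunit_def)
    qed
  qed
qed

lemma mpow_similar:
  fixes L P X :: "'a::field mat3"
  assumes "L ** P = mat 1"
  shows "mpow (L ** X ** P) k = L ** mpow X k ** P"
proof (induction k)
  case 0
  then show ?case
    using assms by simp
next
  case (Suc k)
  have "P ** L = mat 1"
    using assms matrix_left_right_inverse by blast
  then have "L ** X ** P ** (L ** mpow X k ** P) = L ** (X ** mpow X k) ** P"
    by (simp add: matrix_mul_assoc) (simp add: matrix_mul_assoc[symmetric])
  with Suc show ?case
    by simp
qed

lemma nilpotent3_similar:
  fixes L P X :: "'a::field mat3"
  assumes "L ** P = mat 1" and "nilpotent3 X"
  shows "nilpotent3 (L ** X ** P)"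
proof -
  obtain k where "mpow X k = 0"
    using assms(2) unfolding nilpotent3_def by blast
  then have "mpow (L ** X ** P) k = 0"
    by (simp add: mpow_similar[OF assms(1)])
  then show ?thesis
    unfolding nilpotent3_def by blast
qed

lemma trw_similar:
  fixes L P X Y Z :: "'a::field mat3"
  assumes "L ** P = mat 1"
  shows "trw (L ** X ** P, L ** Y ** P, L ** Z ** P) w = trw (X, Y, Z) w"
proof -
  have PL: "P ** L = mat 1"
    using assms matrix_left_right_inverse by blast
  have "word_mat (L ** X ** P, L ** Y ** P, L ** Z ** P) w = L ** word_mat (X, Y, Z) w ** P"
  proof (induction w)
    case Nil
    then show ?case
      using assms by simp
  next
    case (Cons i w)
    have "sel (L ** X ** P, L ** Y ** P, L ** Z ** P) i = L ** sel (X, Y, Z) i ** P"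
      by (simp add: sel_def)
    with Cons PL show ?case
      by (simp add: matrix_mul_assoc) (simp add: matrix_mul_assoc[symmetric])
  qed
  then have "trw (L ** X ** P, L ** Y ** P, L ** Z ** P) w = trace (P ** L ** word_mat (X, Y, Z) w)"
    by (simp add: trw_word_mat trace_mul_sym[of _ P] matrix_mul_assoc)
  with PL show ?thesis
    by (simp add: trw_word_mat)
qed

definition krylov_mat3 :: "'a::semiring_1 mat3 \<Rightarrow> 'a ^ 3 \<Rightarrow> 'a mat3" where
  "krylov_mat3 B v = (\<chi> i j. if j = 1 then ((B ** B) *v v)$i else if j = 2 then (B *v v)$i else v$i)"

lemma krylov_mat3_mult_vec:
  fixes B :: "'a::comm_semiring_1 mat3"
  shows "krylov_mat3 B v *v x = x$1 *s ((B ** B) *v v) + x$2 *s (B *v v) + x$3 *s v"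
  by (simp add: krylov_mat3_def vec_eq_iff matrix_vector_mult_def sum_3 mult.commute)

lemma J2_mult_vec: "J2 *v x = (\<chi> i. if i = 1 then x$2 else if i = 2 then x$3 else (0::'a::semiring_1))"
  by (simp add: J2_def matunit_def vec_eq_iff forall_3 matrix_vector_mult_def sum_3)

lemma krylov_mat3_intertwines_J2:
  fixes B :: "'a::field mat3"
  assumes "B ** (B ** B) = 0"
  shows "B ** krylov_mat3 B v = krylov_mat3 B v ** J2"
proof -
  have "B *v (B *v (B *v v)) = 0"
    using assms by (simp add: matrix_vector_mul_assoc)
  then have "(B ** krylov_mat3 B v) *v x = (krylov_mat3 B v ** J2) *v x" for x
    by (simp add: matrix_vector_mul_assoc[symmetric] krylov_mat3_mult_vec J2_mult_vec
        matrix_vector_right_distrib vector_scalar_commute)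
  then show ?thesis
    using matrix_eq by blast
qed

lemma krylov_mat3_left_invertible:
  fixes B :: "'a::field mat3"
  assumes "B ** (B ** B) = 0" and "(B ** B) *v v \<noteq> 0"
  obtains L where "L ** krylov_mat3 B v = mat 1"
proof -
  define K where "K = krylov_mat3 B v"
  have KJ2: "K *v (J2 *v y) = B *v (K *v y)" for y
    unfolding K_def matrix_vector_mul_assoc krylov_mat3_intertwines_J2[OF assms(1)] ..
  have "x = 0" if x: "K *v x = 0" for x
  proof -
    have "K *v (J2 *v (J2 *v x)) = 0" and "K *v (J2 *v x) = 0" and "K *v x = 0"
      using x by (simp_all add: KJ2)
    then have K3: "x$3 *s ((B ** B) *v v) = 0"
        and K2: "x$2 *s ((B ** B) *v v) + x$3 *s (B *v v) = 0"
        and K1: "x$1 *s ((B ** B) *v v) + x$2 *s (B *v v) + x$3 *s v = 0"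
      by (simp_all add: K_def krylov_mat3_mult_vec J2_mult_vec)
    from K3 assms(2) have x3: "x$3 = 0"
      by simp
    with K2 assms(2) have x2: "x$2 = 0"
      by simp
    with x3 K1 assms(2) have "x$1 = 0"
      by simp
    with x2 x3 show "x = 0"
      by (simp add: vec_eq_iff forall_3)
  qed
  then show ?thesis
    using that matrix_left_invertible_ker unfolding K_def by blast
qed

lemma similar_J2:
  fixes B :: "'a::field mat3"
  assumes "B ** (B ** B) = 0" and "B ** B \<noteq> 0"
  obtains L P where "L ** P = mat 1" and "L ** B ** P = J2"
proof -
  obtain v where v: "(B ** B) *v v \<noteq> 0"
    using assms(2) matrix_eq[of "B ** B" 0] by auto
  obtain L where L: "L ** krylov_mat3 B v = mat 1"
    using krylov_mat3_left_invertible[OF assms(1) v] .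
  have "L ** B ** krylov_mat3 B v = J2"
    using krylov_mat3_intertwines_J2[OF assms(1), of v] L
    by (simp add: matrix_mul_assoc[symmetric]) (simp add: matrix_mul_assoc)
  with L show ?thesis
    using that by blast
qed

lemma mixed_square_words_vanish_J2:
  fixes M C :: "'a::alg_closed_field mat3"
  assumes "nilpotent3 C"
    and hyps: "\<And>u. u \<in> {[1,2,2], [2,3,3], [2,2,3,3], [2,2,3,1]} \<Longrightarrow> trw (M, J2, C) u = 0"
    and "w \<in> {[2,2,3,3,1], [3,3,2,2,1], [2,2,3,3,2,1], [3,3,2,2,3,1]}"
  shows "trw (M, J2, C) w = 0"
proof -
  define Q R where "Q = C ** C" and "R = C ** M"
  have CC: "C ** (C ** X) = Q ** X" and CM: "C ** (M ** X) = R ** X" for X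
    by (simp_all add: Q_def R_def matrix_mul_assoc)
  note eval = trw_word_mat sel_def J2_J2_mult trace_matunit_mult
  have M31: "M$3$1 = 0"
    using hyps[of "[1,2,2]"] trw_rotate[of "(M, J2, C)" "[1]" "[2,2]"] by (simp add: eval)
  have R31: "R$3$1 = 0"
    using hyps[of "[2,2,3,1]"] by (simp add: eval R_def[symmetric])
  have Q31: "Q$3$1 = 0" and "Q$2$1 = - Q$3$2"
    using hyps[of "[2,2,3,3]"] hyps[of "[2,3,3]"]
    by (simp_all add: eval Q_def[symmetric] trace_J2_mult eq_neg_iff_add_eq_0)
  moreover have "Q$3$2 * Q$2$1 = 0"
    using nilpotent3_square_minor[OF assms(1)] Q31 by (simp add: Q_def)
  ultimately have Q21: "Q$2$1 = 0" and Q32: "Q$3$2 = 0"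
    by simp_all
  have "trw (M, J2, C) [2,2,3,3,1] = (Q ** M)$3$1"
    by (simp add: eval CC)
  moreover have "trw (M, J2, C) [3,3,2,2,1] = (M ** Q)$3$1"
    using trw_rotate[of "(M, J2, C)" "[3,3]" "[2,2,1]"] by (simp add: eval Q_def[symmetric])
  moreover have "trw (M, J2, C) [2,2,3,3,2,1] = (Q ** (J2 ** M))$3$1"
    by (simp add: eval CC)
  moreover have "trw (M, J2, C) [3,3,2,2,3,1] = (R ** Q)$3$1"
    using trw_rotate[of "(M, J2, C)" "[3,3]" "[2,2,3,1]"] by (simp add: eval CM Q_def[symmetric])
  ultimately show ?thesis
    using assms(3) M31 R31 Q31 Q21 Q32 by (auto simp: mat3_mult_entry J2_last_row)
qed

lemma mixed_square_words_vanish: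
  fixes M B C :: "'a::alg_closed_field mat3"
  assumes "nilpotent3 B" and "nilpotent3 C"
    and hyps: "\<And>u. u \<in> {[1,2,2], [2,3,3], [2,2,3,3], [2,2,3,1]} \<Longrightarrow> trw (M, B, C) u = 0"
    and "w \<in> {[2,2,3,3,1], [3,3,2,2,1], [2,2,3,3,2,1], [3,3,2,2,3,1]}"
  shows "trw (M, B, C) w = 0"
proof (cases "B ** B = 0")
  case True
  then have "B ** (B ** X) = 0" for X :: "'a mat3"
    by (simp add: matrix_mul_assoc)
  with assms(4) show ?thesis
    by (auto simp: trw_word_mat sel_def trace_mat3)
next
  case False
  obtain L P where LP: "L ** P = mat 1" and B: "L ** B ** P = J2"
    using similar_J2[OF nilpotent3_cube[OF assms(1)] False] .
  have "trw (L ** M ** P, J2, L ** C ** P) u = trw (M, B, C) u" for u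
    using trw_similar[OF LP, of M B C u] B by simp
  with mixed_square_words_vanish_J2[OF nilpotent3_similar[OF LP assms(2)]] hyps assms(4)
  show ?thesis
    by metis
qed

lemma words_in_S33:
  "{[1,1,2], [1,1,3], [1,1,2,2], [1,1,3,3], [1,2,2], [2,3,3], [2,2,3,3]} \<subseteq> S33"
  "{[1,1,2,3], [1,1,3,2], [2,2,3,1]} \<subseteq> S33"
  unfolding S33_def by (simp; presburger) (auto simp: insert_commute)

lemma perm_123_cases:
  assumes "{i, j, k} = {1, 2, 3::nat}"
  shows "(i, j, k) \<in> {(1,2,3), (1,3,2), (2,1,3), (2,3,1), (3,1,2), (3,2,1)}"
proof -
  from assms have "i \<in> {1,2,3}" "j \<in> {1,2,3}" "k \<in> {1,2,3}"
    by blast+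
  then have "i = 1 \<or> i = 2 \<or> i = 3" "j = 1 \<or> j = 2 \<or> j = 3" "k = 1 \<or> k = 2 \<or> k = 3"
    by simp_all
  moreover from assms have "1 \<in> {i,j,k}" "2 \<in> {i,j,k}" "3 \<in> {i,j,k}"
    by blast+
  ultimately show ?thesis
    by (elim disjE) simp_all
qed

lemma P33'_cases:
  assumes "f \<in> P33'"
  shows "f \<in> {[1,1,2,2,3], [1,1,3,3,2], [2,2,1,1,3], [3,3,1,1,2], [1,1,2,2,1,3], [1,1,3,3,1,2],
      [2,2,1,1,2,3], [3,3,1,1,3,2], [1,1,2,2,3,3]}
    \<or> f \<in> {[2,2,3,3,1], [3,3,2,2,1], [2,2,3,3,2,1], [3,3,2,2,3,1]}"
  using assms unfolding P33'_def
proof (elim UnE CollectE exE conjE)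
  fix i j k
  assume "f = [i,i,j,j,k]" and "{i,j,k} = {1,2,3::nat}"
  then show ?thesis
    using perm_123_cases[of i j k] by auto
next
  fix i j k
  assume "f = [i,i,j,j,i,k]" and "{i,j,k} = {1,2,3::nat}"
  then show ?thesis
    using perm_123_cases[of i j k] by auto
qed simp

lemma square_words_vanish_J2_if_agree:
  fixes A2 A3 B2 B3 :: "'a::alg_closed_field mat3"
  assumes "nilpotent3 A2" and "nilpotent3 A3"
    and agree: "\<And>f. f \<in> S33 \<Longrightarrow> trw (J2, A2, A3) f = trw (J1, B2, B3) f"
  shows "trw (J2, A2, A3) (a # a # b # w) = 0"
proof (rule square_words_vanish_J2[OF assms(1,2)])
  have entry: "(word_mat (J2, A2, A3) u)$3$1 = 0" if "1 # 1 # u \<in> S33" for u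
    using agree[OF that] trw_J1_square_prefix[of B2 B3 u] trw_J2_square_prefix[of A2 A3 u]
    by simp
  show "X$3$1 = 0" if "X \<in> {A2, A3}" for X
    using that entry[of "[2]"] entry[of "[3]"] words_in_S33 by (auto simp: sel_def)
  show "(X ** Y)$3$1 = 0" if "X \<in> {A2, A3}" "Y \<in> {A2, A3}" for X Y
    using that entry[of "[2,2]"] entry[of "[2,3]"] entry[of "[3,2]"] entry[of "[3,3]"]
      words_in_S33 by (auto simp: sel_def)
qed

lemma P33'_words_vanish_J1_if_agree:
  fixes A2 A3 B2 B3 :: "'a::alg_closed_field mat3"
  assumes "nilpotent3 A2" and "nilpotent3 A3" and "nilpotent3 B2" and "nilpotent3 B3"
    and agree: "\<And>f. f \<in> S33 \<Longrightarrow> trw (J2, A2, A3) f = trw (J1, B2, B3) f"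
    and "f \<in> P33'"
  shows "trw (J1, B2, B3) f = 0"
proof -
  note A_zero = square_words_vanish_J2_if_agree[OF assms(1,2) agree]
  have "trw (J1, B2, B3) u = 0" if u: "u \<in> {[1,2,2], [2,3,3], [2,2,3,3], [2,2,3,1]}" for u
  proof -
    have "trw (J2, A2, A3) u = 0"
      using u A_zero trw_rotate[of "(J2, A2, A3)" "[1]" "[2,2]"]
        trw_rotate[of "(J2, A2, A3)" "[2]" "[3,3]"] by auto
    moreover have "u \<in> S33"
      using u words_in_S33 by auto
    ultimately show ?thesis
      using agree by simp
  qed
  then have B_mixed: "trw (J1, B2, B3) f = 0"
    if "f \<in> {[2,2,3,3,1], [3,3,2,2,1], [2,2,3,3,2,1], [3,3,2,2,3,1]}"
    using mixed_square_words_vanish[OF assms(3,4)] that by blast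
  from P33'_cases[OF assms(6)] show ?thesis
  proof
    assume "f \<in> {[1,1,2,2,3], [1,1,3,3,2], [2,2,1,1,3], [3,3,1,1,2], [1,1,2,2,1,3], [1,1,3,3,1,2],
      [2,2,1,1,2,3], [3,3,1,1,3,2], [1,1,2,2,3,3]}"
    then show ?thesis
      by (auto simp: trw_word_mat sel_def J1_J1_mult trace_mat3)
  qed (rule B_mixed)
qed

theorem lemma6p1:
  fixes A2 A3 B2 B3 :: "'a::{alg_closed_field, field_char_0} ^ 3 ^ 3"
  assumes "(J2, A2, A3) \<in> N33"
    and "(J1, B2, B3) \<in> N33"
    and "\<forall>f\<in>S33. trw (J2, A2, A3) f = trw (J1, B2, B3) f"
  shows "\<forall>f\<in>P33. trw (J2, A2, A3) f = trw (J1, B2, B3) f"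
proof -
  have nil: "nilpotent3 A2" "nilpotent3 A3" "nilpotent3 B2" "nilpotent3 B3"
    using assms(1,2) by (simp_all add: N33_def)
  have agree: "trw (J2, A2, A3) f = trw (J1, B2, B3) f" if "f \<in> S33" for f
    using assms(3) that by blast
  have "trw (J2, A2, A3) f = 0" if "f \<in> P33'" for f
    using that square_words_vanish_J2_if_agree[OF nil(1,2) agree] unfolding P33'_def by auto
  moreover have "trw (J1, B2, B3) f = 0" if "f \<in> P33'" for f
    using P33'_words_vanish_J1_if_agree[OF nil agree that] .
  ultimately show ?thesis
    using agree unfolding P33_def by auto
qed

end
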